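(* In the setting of the context, the map $\mathscr H$ defined on $\mathscr P_1^C$ by \[ (\mathscr H\eta)_{r'}=\sum_{r\in C}\frac{\pi_rQ_{r,r'}}{\pi_{r'}}(f_r)_*\eta_r\qquad(r'\in C) \] maps $\mathscr P_1^C$ into $\mathscr P_1^C$ and satisfies $\mathcal W(\mathscr H\eta,\mathscr H\zeta)\le\rho\,\mathcal W(\eta,\zeta)$ for all $\eta,\zeta\in\mathscr P_1^C$.
   Context: Setting (construction of the paper): $X$ finite, $P$ irreducible row-stochastic, $\Sigma=\{x\in X^{\mathbb N_0}:P_{x_nx_{n+1}}>0\}$, $\{A_i\}_{i\in X}\subset\mathrm{GL}_2(\mathbb R)$ projectively uniformly hyperbolic w.r.t. $\Sigma$ (on $\widehat\Sigma=\{(x_n)_{n\in\mathbb Z}:P_{x_nx_{n+1}}>0\}$ there is a continuous invariant splitting $\mathbb R^2=E^d\oplus E^w$ into lines, $A_{x_0}E^*(\hat x)=E^*(\widehat\sigma\hat x)$, with $\|A_{x_{n-1}}\cdots A_{x_0}|_{E^w}\|<\|A_{x_{n-1}}\cdots A_{x_0}|_{E^d}\|$ for some $n$). A multicone $\{M_i\}$ is fixed (non-empty proper finite unions of open intervals in $\mathbb{RP}^1$, $\overline{[A_j](M_i)}\subset M_j$ when $P_{ij}>0$), with components $M_{i,a}$; $\beta(i,a,j)$ the unique $b$ with $[A_j](\overline{M_{i,a}})\subset M_{j,b}$; $R=\{((i,a),(j,b)):P_{ij}>0,\ b=\beta(i,a,j)\}$, $s(r)=(i,a)$, $t(r)=(j,b)$,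 $\tau(r)=j$; $Q_{r,r'}=P_{\tau(r)\tau(r')}$ if $t(r)=s(r')$ else $0$; $C$ a fixed recurrent class. $L_{i,a}\in\mathrm{GL}_2(\mathbb R)$ maps the projective non-negative cone onto $\overline{M_{i,a}}$; $B_r=\pm L_{t(r)}^{-1}A_{\tau(r)}L_{s(r)}$, sign chosen so $B_r$ is entrywise positive. If the period $d$ of $Q|_C$ exceeds $1$, $C,Q,B$ are replaced by the $d$-step system on words $(c_0,\dots,c_{d-1})$ through the cyclic classes ($Q_{c,c'}=Q_{c_{d-1}c'_0}Q_{c'_0c'_1}\cdots Q_{c'_{d-2}c'_{d-1}}$, $B_c=B_{c_{d-1}}\cdots B_{c_0}$), keeping names; then $Q|_C$ is irreducible and aperiodic with stationary vector $\pi$, $\pi_r>0$. For $B_r=\begin{pmatrix}a_r&b_r\\c_r&d_r\end{pmatrix}$, $f_r(x)=\frac{(a_r-b_r-c_r+d_r)x+(a_r+b_r-c_r-d_r)}{(a_r-b_r+c_r-d_r)x+(a_r+b_r+c_r+d_r)}$, and $0<\rho<1$ is fixed with $f_r([-1,1])\subset[-\rho,\rho]$ for all $r\in C$. Metrics: $d_{\mathrm{hyp}}(x,y)=2|\mathrm{artanh}\,x-\mathrm{artanh}\,y|$ on $(-1,1)$; $\mathscr P_1(-1,1)$ is the set of Borel probability measures $\nu$ on $(-1,1)$ with $\int d_{\mathrm{hyp}}(x,0)\,d\nu<\infty$; $W_1(\nu_1,\nu_2)=\inf_\eta\int d_{\mathrm{hyp}}(x,y)\,d\eta(x,y)$ over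 couplings $\eta$ of $\nu_1,\nu_2$; $\mathscr P_1^C=\prod_{r\in C}\mathscr P_1(-1,1)$ with metric $\mathcal W(\eta,\zeta)=\sum_{r\in C}\pi_rW_1(\eta_r,\zeta_r)$. *)

theory Defs
  imports "HOL-Probability.Probability"
begin

definition dhyp :: "real \<Rightarrow> real \<Rightarrow> real" where
  "dhyp x y = 2 * \<bar>artanh x - artanh y\<bar>"

definition Ihyp :: "real measure" where
  "Ihyp = restrict_space borel {-1<..<1}"

definition P1 :: "real measure set" where
  "P1 = {\<nu>. sets \<nu> = sets Ihyp \<and> prob_space \<nu> \<and>
              (\<integral>\<^sup>+ x. ennreal (dhyp x 0) \<partial>\<nu>) < \<infinity>}"

definition couplings :: "real measure \<Rightarrow> real measure \<Rightarrow> (real \<times> real) measure set" where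
  "couplings \<nu>1 \<nu>2 = {\<eta>. sets \<eta> = sets (Ihyp \<Otimes>\<^sub>M Ihyp) \<and> prob_space \<eta> \<and>
                          distr \<eta> Ihyp fst = \<nu>1 \<and> distr \<eta> Ihyp snd = \<nu>2}"

definition W1 :: "real measure \<Rightarrow> real measure \<Rightarrow> ennreal" where
  "W1 \<nu>1 \<nu>2 = (INF \<eta>\<in>couplings \<nu>1 \<nu>2. \<integral>\<^sup>+ p. ennreal (dhyp (fst p) (snd p)) \<partial>\<eta>)"

definition P1C :: "'r set \<Rightarrow> ('r \<Rightarrow> real measure) set" where
  "P1C C = Pi C (\<lambda>_. P1)"

definition WC :: "'r set \<Rightarrow> ('r \<Rightarrow> real) \<Rightarrow> ('r \<Rightarrow> real measure) \<Rightarrow> ('r \<Rightarrow> real measure) \<Rightarrow> ennreal" where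
  "WC C \<pi> \<eta> \<zeta> = (\<Sum>r\<in>C. ennreal (\<pi> r) * W1 (\<eta> r) (\<zeta> r))"

definition wsum_measure :: "'b measure \<Rightarrow> 'a set \<Rightarrow> ('a \<Rightarrow> real) \<Rightarrow> ('a \<Rightarrow> 'b measure) \<Rightarrow> 'b measure" where
  "wsum_measure S I w \<mu> =
     measure_of (space S) (sets S) (\<lambda>A. \<Sum>i\<in>I. ennreal (w i) * emeasure (\<mu> i) A)"

definition fmob :: "real^2^2 \<Rightarrow> real \<Rightarrow> real" where
  "fmob B x = (let a = B$1$1; b = B$1$2; c = B$2$1; d = B$2$2 in
      ((a - b - c + d) * x + (a + b - c - d)) / ((a - b + c - d) * x + (a + b + c + d)))"

fun qpow :: "'r set \<Rightarrow> ('r \<Rightarrow> 'r \<Rightarrow> real) \<Rightarrow> nat \<Rightarrow> 'r \<Rightarrow> 'r \<Rightarrow> real" where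
  "qpow C Q 0 r r' = (if r = r' then 1 else 0)"
| "qpow C Q (Suc n) r r' = (\<Sum>k\<in>C. qpow C Q n r k * Q k r')"

definition irreducible_on :: "'r set \<Rightarrow> ('r \<Rightarrow> 'r \<Rightarrow> real) \<Rightarrow> bool" where
  "irreducible_on C Q \<longleftrightarrow> (\<forall>r\<in>C. \<forall>r'\<in>C. \<exists>n>0. qpow C Q n r r' > 0)"

definition aperiodic_on :: "'r set \<Rightarrow> ('r \<Rightarrow> 'r \<Rightarrow> real) \<Rightarrow> bool" where
  "aperiodic_on C Q \<longleftrightarrow> (\<forall>r\<in>C. Gcd {n. n > 0 \<and> qpow C Q n r r > 0} = (1::nat))"

definition Hop :: "'r set \<Rightarrow> ('r \<Rightarrow> 'r \<Rightarrow> real) \<Rightarrow> ('r \<Rightarrow> real) \<Rightarrow> ('r \<Rightarrow> real \<Rightarrow> real)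
                   \<Rightarrow> ('r \<Rightarrow> real measure) \<Rightarrow> ('r \<Rightarrow> real measure)" where
  "Hop C Q \<pi> f \<eta> = (\<lambda>r'. wsum_measure Ihyp C (\<lambda>r. \<pi> r * Q r r' / \<pi> r') (\<lambda>r. distr (\<eta> r) Ihyp (f r)))"

end

theory Submission
  imports Defs
begin

(* In the coordinate u = 2 artanh x, d_hyp is the Euclidean distance |u - v| and the Moebius
   map f_r becomes h(u) = ln (a e^u + b) - ln (c e^u + d), where (a, b; c, d) = B_r. Its
   derivative (ad - bc) e^u / ((a e^u + b)(c e^u + d)) has modulus at most rho: f_r(1) and
   f_r(-1) lie in [-rho, rho], i.e. |a - c| <= rho (a + c) and |b - d| <= rho (b + d), and AM-GM
   for sqrt (ad), sqrt (bc) turns this into |ad - bc| <= rho (a + b)(c + d). So each f_r is a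
   rho-contraction for d_hyp, which keeps first moments finite.
   Given couplings gamma_r of eta_r and zeta_r, push them forward by f_r x f_r and mix them with
   the weights pi_r Q_{r,r'} / pi_{r'}, which sum to 1 by stationarity. This couples
   (H eta)_{r'} and (H zeta)_{r'} at cost at most rho sum_r (pi_r Q_{r,r'} / pi_{r'}) cost(gamma_r);
   weighting by pi_{r'} and summing over r' leaves rho sum_r pi_r cost(gamma_r) because Q is
   stochastic, and the gamma_r can be optimised independently. *)

section \<open>Finite mixtures of measures\<close>

lemma sets_wsum_measure [simp, measurable_cong]: "sets (wsum_measure S I w \<mu>) = sets S"
  unfolding wsum_measure_def by (simp add: sets.space_closed sets.sigma_sets_eq)

lemma space_wsum_measure [simp]: "space (wsum_measure S I w \<mu>) = space S"
  unfolding wsum_measure_def by simp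

lemma emeasure_wsum_measure:
  assumes "finite I" and sets_eq: "\<And>i. i \<in> I \<Longrightarrow> sets (\<mu> i) = sets S" and "A \<in> sets S"
  shows "emeasure (wsum_measure S I w \<mu>) A = (\<Sum>i\<in>I. ennreal (w i) * emeasure (\<mu> i) A)"
  unfolding wsum_measure_def
proof (rule emeasure_measure_of_sigma[OF sets.sigma_algebra_axioms _ _ \<open>A \<in> sets S\<close>])
  show "positive (sets S) (\<lambda>A. \<Sum>i\<in>I. ennreal (w i) * emeasure (\<mu> i) A)"
    by (simp add: positive_def)
  show "countably_additive (sets S) (\<lambda>A. \<Sum>i\<in>I. ennreal (w i) * emeasure (\<mu> i) A)"
  proof (rule countably_additiveI)
    fix A :: "nat \<Rightarrow> _"
    assume A: "range A \<subseteq> sets S" "disjoint_family A"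
    have "(\<Sum>n. \<Sum>i\<in>I. ennreal (w i) * emeasure (\<mu> i) (A n))
        = (\<Sum>i\<in>I. ennreal (w i) * (\<Sum>n. emeasure (\<mu> i) (A n)))"
      by (simp add: suminf_sum)
    also have "\<dots> = (\<Sum>i\<in>I. ennreal (w i) * emeasure (\<mu> i) (\<Union> (range A)))"
      using A sets_eq by (intro sum.cong refl arg_cong2[where f = "(*)"] suminf_emeasure) auto
    finally show "(\<Sum>n. \<Sum>i\<in>I. ennreal (w i) * emeasure (\<mu> i) (A n))
        = (\<Sum>i\<in>I. ennreal (w i) * emeasure (\<mu> i) (\<Union> (range A)))" .
  qed
qed

lemma nn_integral_wsum_measure:
  assumes fin: "finite I" and sets_eq: "\<And>i. i \<in> I \<Longrightarrow> sets (\<mu> i) = sets S"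
    and f: "f \<in> borel_measurable S"
  shows "(\<integral>\<^sup>+x. f x \<partial>wsum_measure S I w \<mu>) = (\<Sum>i\<in>I. ennreal (w i) * (\<integral>\<^sup>+x. f x \<partial>\<mu> i))"
  using f
proof induction
  case (cong f g)
  have "(\<integral>\<^sup>+x. f x \<partial>wsum_measure S I w \<mu>) = (\<integral>\<^sup>+x. g x \<partial>wsum_measure S I w \<mu>)"
    using cong.hyps by (intro nn_integral_cong) simp
  moreover have "\<And>i. i \<in> I \<Longrightarrow> (\<integral>\<^sup>+x. f x \<partial>\<mu> i) = (\<integral>\<^sup>+x. g x \<partial>\<mu> i)"
    using cong.hyps sets_eq_imp_space_eq[OF sets_eq] by (intro nn_integral_cong) simp
  ultimately show ?case using cong.IH by simp
next
  case (set A)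
  then show ?case using sets_eq by (simp add: emeasure_wsum_measure[OF fin sets_eq])
next
  case (mult f c)
  then show ?case using sets_eq
    by (simp add: nn_integral_cmult sum_distrib_left ac_simps cong: measurable_cong_sets)
next
  case (add f g)
  then show ?case using sets_eq
    by (simp add: nn_integral_add sum.distrib distrib_left cong: measurable_cong_sets)
next
  case (seq U)
  have U_meas: "\<And>i j. i \<in> I \<Longrightarrow> U j \<in> borel_measurable (\<mu> i)"
    using seq sets_eq by (simp cong: measurable_cong_sets)
  have "(\<integral>\<^sup>+x. (SUP j. U j x) \<partial>wsum_measure S I w \<mu>) = (SUP j. \<integral>\<^sup>+x. U j x \<partial>wsum_measure S I w \<mu>)"
    using seq by (intro nn_integral_monotone_convergence_SUP) auto
  also have "\<dots> = (SUP j. \<Sum>i\<in>I. ennreal (w i) * (\<integral>\<^sup>+x. U j x \<partial>\<mu> i))"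
    using seq.IH by simp
  also have "\<dots> = (\<Sum>i\<in>I. SUP j. ennreal (w i) * (\<integral>\<^sup>+x. U j x \<partial>\<mu> i))"
    using seq.hyps(3) by (intro ennreal_SUP_sum) (auto intro!: mult_left_mono nn_integral_mono
        simp: incseq_def le_fun_def)
  also have "\<dots> = (\<Sum>i\<in>I. ennreal (w i) * (\<integral>\<^sup>+x. (SUP j. U j x) \<partial>\<mu> i))"
    using seq U_meas by (simp add: SUP_mult_left_ennreal nn_integral_monotone_convergence_SUP)
  finally show ?case by (simp add: image_comp)
qed

lemma wsum_measure_cong:
  "(\<And>i. i \<in> I \<Longrightarrow> \<mu> i = \<nu> i) \<Longrightarrow> wsum_measure S I w \<mu> = wsum_measure S I w \<nu>"
  unfolding wsum_measure_def by (metis (no_types, lifting) sum.cong)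

lemma distr_wsum_measure:
  assumes fin: "finite I" and sets_eq: "\<And>i. i \<in> I \<Longrightarrow> sets (\<mu> i) = sets S"
    and g: "g \<in> S \<rightarrow>\<^sub>M T"
  shows "distr (wsum_measure S I w \<mu>) T g = wsum_measure T I w (\<lambda>i. distr (\<mu> i) T g)"
proof (rule measure_eqI)
  fix A assume "A \<in> sets (distr (wsum_measure S I w \<mu>) T g)"
  then have A: "A \<in> sets T" by simp
  have "g \<in> \<mu> i \<rightarrow>\<^sub>M T" and "space (\<mu> i) = space S" if "i \<in> I" for i
    using g sets_eq[OF that] sets_eq_imp_space_eq[OF sets_eq[OF that]]
    by (simp_all cong: measurable_cong_sets)
  with A g show "emeasure (distr (wsum_measure S I w \<mu>) T g) A
      = emeasure (wsum_measure T I w (\<lambda>i. distr (\<mu> i) T g)) A"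
    by (simp add: emeasure_distr emeasure_wsum_measure[OF fin] sets_eq)
qed simp

lemma prob_space_wsum_measure:
  assumes fin: "finite I" and sets_eq: "\<And>i. i \<in> I \<Longrightarrow> sets (\<mu> i) = sets S"
    and prob: "\<And>i. i \<in> I \<Longrightarrow> prob_space (\<mu> i)"
    and w_nonneg: "\<And>i. i \<in> I \<Longrightarrow> w i \<ge> 0" and w_sum: "(\<Sum>i\<in>I. w i) = 1"
  shows "prob_space (wsum_measure S I w \<mu>)"
proof
  have "emeasure (wsum_measure S I w \<mu>) (space S) = (\<Sum>i\<in>I. ennreal (w i))"
    using sets_eq_imp_space_eq[OF sets_eq] prob_space.emeasure_space_1[OF prob]
    by (simp add: emeasure_wsum_measure[OF fin sets_eq])
  also have "\<dots> = 1" using w_nonneg w_sum by simp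
  finally show "emeasure (wsum_measure S I w \<mu>) (space (wsum_measure S I w \<mu>)) = 1" by simp
qed

lemma space_Ihyp: "space Ihyp = {-1<..<1}"
  by (simp add: Ihyp_def)

lemma borel_measurable_artanh_Ihyp [measurable]: "(artanh :: real \<Rightarrow> real) \<in> borel_measurable Ihyp"
  unfolding Ihyp_def artanh_def[abs_def] by (rule measurable_restrict_space1) measurable

lemma borel_measurable_dhyp [measurable]:
  "(\<lambda>p. ennreal (dhyp (fst p) (snd p))) \<in> borel_measurable (Ihyp \<Otimes>\<^sub>M Ihyp)"
  unfolding dhyp_def by measurable

lemma borel_measurable_dhyp_0 [measurable]: "(\<lambda>x. ennreal (dhyp x 0)) \<in> borel_measurable Ihyp"
  unfolding dhyp_def by measurable

lemma dhyp_triangle: "dhyp x z \<le> dhyp x y + dhyp y z"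
  unfolding dhyp_def by (simp add: abs_if)

lemma dhyp_eq_abs_diff_ln: "dhyp x y = \<bar>ln ((1 + x) / (1 - x)) - ln ((1 + y) / (1 - y))\<bar>"
  by (simp add: dhyp_def artanh_def abs_if)

definition transport_cost :: "(real \<times> real) measure \<Rightarrow> ennreal" where
  "transport_cost \<gamma> = (\<integral>\<^sup>+p. ennreal (dhyp (fst p) (snd p)) \<partial>\<gamma>)"

lemma W1_eq_INF_transport_cost: "W1 \<nu>1 \<nu>2 = (INF \<gamma>\<in>couplings \<nu>1 \<nu>2. transport_cost \<gamma>)"
  by (simp add: W1_def transport_cost_def)

section \<open>Moebius maps contract the hyperbolic metric\<close>

lemma mult_sqrt_le_mult_sqrt:
  fixes k l x y u v :: real
  assumes "0 \<le> k" "0 \<le> l" "0 \<le> x" "0 \<le> y" and xu: "k * x \<le> l * u" and yv: "k * y \<le> l * v"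
  shows "k * sqrt (x * y) \<le> l * sqrt (u * v)"
proof -
  have sqrt_scale: "sqrt ((c * s) * (c * t)) = c * sqrt (s * t)" if "c \<ge> 0" for c s t :: real
  proof -
    have "(c * s) * (c * t) = c\<^sup>2 * (s * t)" by (simp add: power2_eq_square)
    then show ?thesis using that by (simp add: real_sqrt_mult)
  qed
  have "k * sqrt (x * y) = sqrt ((k * x) * (k * y))"
    using \<open>0 \<le> k\<close> by (simp add: sqrt_scale)
  also have "\<dots> \<le> sqrt ((l * u) * (l * v))"
    using assms order_trans[OF mult_nonneg_nonneg xu]
    by (intro real_sqrt_le_mono mult_mono[OF xu yv]) auto
  also have "\<dots> = l * sqrt (u * v)"
    using \<open>0 \<le> l\<close> by (simp add: sqrt_scale)
  finally show ?thesis .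
qed

lemma abs_det_le_of_abs_diff_le:
  fixes a b c d \<rho> :: real
  assumes pos: "a > 0" "b > 0" "c > 0" "d > 0" and \<rho>: "0 \<le> \<rho>" "\<rho> \<le> 1"
    and ac: "\<bar>a - c\<bar> \<le> \<rho> * (a + c)" and bd: "\<bar>b - d\<bar> \<le> \<rho> * (b + d)"
  shows "\<bar>a * d - b * c\<bar> \<le> \<rho> * ((a + b) * (c + d))"
proof -
  define p q where "p = sqrt (a * d)" and "q = sqrt (c * b)"
  have p: "p \<ge> 0" "p\<^sup>2 = a * d" and q: "q \<ge> 0" "q\<^sup>2 = b * c"
    using pos by (simp_all add: p_def q_def)
  have "(1 - \<rho>) * a \<le> (1 + \<rho>) * c" "(1 - \<rho>) * c \<le> (1 + \<rho>) * a"
    "(1 - \<rho>) * b \<le> (1 + \<rho>) * d" "(1 - \<rho>) * d \<le> (1 + \<rho>) * b"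
    using ac bd by (simp_all add: abs_le_iff algebra_simps)
  then have "(1 - \<rho>) * p \<le> (1 + \<rho>) * q" "(1 - \<rho>) * q \<le> (1 + \<rho>) * p"
    unfolding p_def q_def using pos \<rho> by (auto intro: mult_sqrt_le_mult_sqrt)
  then have pq: "\<bar>p - q\<bar> \<le> \<rho> * (p + q)"
    by (simp add: abs_le_iff algebra_simps)
  have "p * q = sqrt ((a * c) * (b * d))"
    by (simp add: p_def q_def ac_simps flip: real_sqrt_mult)
  also have "\<dots> \<le> (a * c + b * d) / 2"
    using pos by (intro arith_geo_mean_sqrt) auto
  finally have sum_sq: "(p + q)\<^sup>2 \<le> (a + b) * (c + d)"
    using p q by (simp add: power2_sum algebra_simps)
  have "a * d - b * c = (p - q) * (p + q)"
    by (simp flip: p(2) q(2) add: power2_eq_square algebra_simps)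
  then have "\<bar>a * d - b * c\<bar> = \<bar>p - q\<bar> * (p + q)"
    using p q by (simp add: abs_mult)
  also have "\<dots> \<le> \<rho> * (p + q)\<^sup>2"
    using mult_right_mono[OF pq, of "p + q"] p q by (simp add: power2_eq_square mult.assoc)
  also have "\<dots> \<le> \<rho> * ((a + b) * (c + d))"
    using sum_sq \<rho> by (intro mult_left_mono) auto
  finally show ?thesis .
qed

lemma abs_diff_ln_ratio_exp_le:
  fixes a b c d \<rho> u v :: real
  assumes pos: "a > 0" "b > 0" "c > 0" "d > 0" and \<rho>: "0 \<le> \<rho>" "\<rho> \<le> 1"
    and ac: "\<bar>a - c\<bar> \<le> \<rho> * (a + c)" and bd: "\<bar>b - d\<bar> \<le> \<rho> * (b + d)"
  shows "\<bar>ln ((a * exp u + b) / (c * exp u + d)) - ln ((a * exp v + b) / (c * exp v + d))\<bar>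
    \<le> \<rho> * \<bar>u - v\<bar>"
proof -
  define h h' where "h t = ln (a * exp t + b) - ln (c * exp t + d)"
    and "h' t = a * exp t / (a * exp t + b) - c * exp t / (c * exp t + d)" for t
  have "(h has_field_derivative h' t) (at t within UNIV)" for t
    unfolding h_def h'_def using pos by (auto intro!: derivative_eq_intros add_pos_pos simp: mult.commute)
  moreover have "norm (h' t) \<le> \<rho>" for t
  proof -
    have denom_pos: "a * exp t + b > 0" "c * exp t + d > 0"
      using pos by (simp_all add: add_pos_pos)
    have "\<bar>a * exp t - c * exp t\<bar> = \<bar>a - c\<bar> * exp t"
      by (simp add: abs_mult flip: left_diff_distrib)
    also have "\<dots> \<le> \<rho> * (a * exp t + c * exp t)"
      using mult_right_mono[OF ac, of "exp t"] by (simp add: algebra_simps)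
    finally have "\<bar>a * exp t - c * exp t\<bar> \<le> \<rho> * (a * exp t + c * exp t)" .
    from abs_det_le_of_abs_diff_le[OF _ pos(2) _ pos(4) \<rho> this bd]
    have "\<bar>a * exp t * d - b * (c * exp t)\<bar> \<le> \<rho> * ((a * exp t + b) * (c * exp t + d))"
      using pos by simp
    moreover have "h' t = (a * exp t * d - b * (c * exp t)) / ((a * exp t + b) * (c * exp t + d))"
      unfolding h'_def using denom_pos by (simp add: field_simps)
    ultimately show ?thesis
      using denom_pos by (simp add: abs_mult divide_le_eq)
  qed
  ultimately have "\<bar>h u - h v\<bar> \<le> \<rho> * \<bar>u - v\<bar>"
    using field_differentiable_bound[OF convex_UNIV, of h h' \<rho> u v] by simp
  moreover have "ln ((a * exp t + b) / (c * exp t + d)) = h t" for t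
    unfolding h_def using pos by (intro ln_divide_pos) (simp_all add: add_pos_pos)
  ultimately show ?thesis
    by simp
qed

text \<open>The coordinate t = (1 + x) / (1 - x) = exp (2 * artanh x) maps (-1,1) onto the positive
  half-line; in it, fmob B becomes the linear fractional map t \<mapsto> (a t + b) / (c t + d) of
  B = (a, b; c, d), i.e. the action of B on the positive cone.\<close>

lemma fmob_cayley:
  fixes B :: "real^2^2"
  assumes B_pos: "\<forall>i j. B $ i $ j > 0" and x: "-1 < x" "x < 1"
  shows "(1 + fmob B x) / (1 - fmob B x)
    = (B$1$1 * ((1 + x) / (1 - x)) + B$1$2) / (B$2$1 * ((1 + x) / (1 - x)) + B$2$2)"
proof -
  define a b c d where "a = B$1$1" and "b = B$1$2" and "c = B$2$1" and "d = B$2$2"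
  define P R where "P = a * (1 + x) + b * (1 - x)" and "R = c * (1 + x) + d * (1 - x)"
  have "a > 0" "b > 0" "c > 0" "d > 0"
    using B_pos by (simp_all add: a_def b_def c_def d_def)
  then have "P > 0" "R > 0"
    using x by (simp_all add: P_def R_def add_pos_pos)
  have "fmob B x = (P - R) / (P + R)"
    by (simp add: fmob_def Let_def P_def R_def a_def b_def c_def d_def algebra_simps)
  with \<open>P > 0\<close> \<open>R > 0\<close> have "1 + fmob B x = 2 * P / (P + R)" "1 - fmob B x = 2 * R / (P + R)"
    by (simp_all add: field_simps)
  with \<open>P > 0\<close> \<open>R > 0\<close> have "(1 + fmob B x) / (1 - fmob B x) = P / R"
    by simp
  also have "\<dots> = (a * ((1 + x) / (1 - x)) + b) / (c * ((1 + x) / (1 - x)) + d)"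
  proof -
    have "1 - x > 0" using x by simp
    then have "P = (1 - x) * (a * ((1 + x) / (1 - x)) + b)" "R = (1 - x) * (c * ((1 + x) / (1 - x)) + d)"
      by (simp_all add: P_def R_def field_simps)
    with \<open>1 - x > 0\<close> show ?thesis by simp
  qed
  finally show ?thesis
    by (simp add: a_def b_def c_def d_def)
qed

lemma dhyp_fmob_le:
  fixes B :: "real^2^2"
  assumes B_pos: "\<forall>i j. B $ i $ j > 0" and "\<rho> \<le> 1"
    and into: "fmob B ` {-1..1} \<subseteq> {-\<rho>..\<rho>}"
    and x: "x \<in> {-1<..<1}" and y: "y \<in> {-1<..<1}"
  shows "dhyp (fmob B x) (fmob B y) \<le> \<rho> * dhyp x y"
proof -
  define a b c d where "a = B$1$1" and "b = B$1$2" and "c = B$2$1" and "d = B$2$2"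
  have pos: "a > 0" "b > 0" "c > 0" "d > 0"
    using B_pos by (simp_all add: a_def b_def c_def d_def)
  have "fmob B 1 = (a - c) / (a + c)" "fmob B (-1) = (b - d) / (b + d)"
    using pos by (simp_all add: fmob_def Let_def a_def b_def c_def d_def field_simps)
  moreover have "fmob B 1 \<in> {-\<rho>..\<rho>}" "fmob B (-1) \<in> {-\<rho>..\<rho>}"
    by (rule subsetD[OF into imageI]; simp)+
  ultimately have ac: "\<bar>a - c\<bar> \<le> \<rho> * (a + c)" and bd: "\<bar>b - d\<bar> \<le> \<rho> * (b + d)"
    using pos by (simp_all add: abs_le_iff pos_divide_le_eq le_divide_eq)
  then have "0 \<le> \<rho> * (a + c)"
    by (meson abs_ge_zero order_trans)
  with pos have "0 \<le> \<rho>"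
    by (simp add: zero_le_mult_iff)
  define u where "u z = ln ((1 + z) / (1 - z))" for z :: real
  have ratio: "(1 + fmob B z) / (1 - fmob B z) = (a * exp (u z) + b) / (c * exp (u z) + d)"
    if "z \<in> {-1<..<1}" for z
    using fmob_cayley[OF B_pos] that by (simp add: u_def a_def b_def c_def d_def)
  have "dhyp (fmob B x) (fmob B y)
      = \<bar>ln ((a * exp (u x) + b) / (c * exp (u x) + d)) - ln ((a * exp (u y) + b) / (c * exp (u y) + d))\<bar>"
    by (simp only: dhyp_eq_abs_diff_ln ratio[OF x] ratio[OF y])
  also have "\<dots> \<le> \<rho> * \<bar>u x - u y\<bar>"
    by (rule abs_diff_ln_ratio_exp_le[OF pos \<open>0 \<le> \<rho>\<close> \<open>\<rho> \<le> 1\<close> ac bd])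
  also have "\<dots> = \<rho> * dhyp x y"
    by (simp add: dhyp_eq_abs_diff_ln u_def)
  finally show ?thesis .
qed

lemma fmob_measurable_Ihyp:
  assumes "fmob B ` {-1..1} \<subseteq> {-\<rho>..\<rho>}" and "\<rho> < 1"
  shows "fmob B \<in> Ihyp \<rightarrow>\<^sub>M Ihyp"
  unfolding Ihyp_def
proof (rule measurable_restrict_space3)
  show "fmob B \<in> borel \<rightarrow>\<^sub>M borel"
    unfolding fmob_def Let_def by measurable
  show "fmob B \<in> {-1<..<1} \<rightarrow> {-1<..<1}"
  proof
    fix z :: real
    assume "z \<in> {-1<..<1}"
    then have "z \<in> {-1..1}"
      by simp
    from subsetD[OF assms(1) imageI[OF this]] have "fmob B z \<in> {-\<rho>..\<rho>}" .
    then show "fmob B z \<in> {-1<..<1}"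
      using assms(2) by auto
  qed
qed

lemma ennreal_le_add_mult_INF:
  fixes X A a :: ennreal and c :: "'g \<Rightarrow> ennreal"
  assumes a: "0 < a" "a < top" and le: "\<And>g. g \<in> G \<Longrightarrow> X \<le> A + a * c g"
  shows "X \<le> A + a * (INF g\<in>G. c g)"
proof (cases "G = {}")
  case True
  then show ?thesis
    using a by (simp add: ennreal_mult_top less_imp_neq[symmetric])
next
  case False
  define f where "f y = A + a * y" for y :: ennreal
  have "mono f"
    unfolding f_def by (auto simp: mono_def intro: add_left_mono mult_left_mono)
  moreover have "isCont f y" for y
    unfolding isCont_def f_def
    by (intro tendsto_add tendsto_const ennreal_tendsto_cmult[OF a(2)] tendsto_ident_at)
  ultimately have "f (INF g\<in>G. c g) = (INF s\<in>c ` G. f s)"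
    using False by (intro continuous_at_Inf_mono) (auto intro: continuous_at_imp_continuous_at_within)
  moreover have "X \<le> (INF s\<in>c ` G. f s)"
    using le by (auto simp: f_def intro!: INF_greatest)
  ultimately show ?thesis by (simp add: f_def)
qed

lemma ennreal_le_sum_mult_INF:
  fixes X :: ennreal and a :: "'i \<Rightarrow> ennreal" and c :: "'i \<Rightarrow> 'g \<Rightarrow> ennreal"
  assumes "finite I" and a: "\<And>i. i \<in> I \<Longrightarrow> 0 < a i" "\<And>i. i \<in> I \<Longrightarrow> a i < top"
    and le: "\<And>\<gamma>. (\<And>i. i \<in> I \<Longrightarrow> \<gamma> i \<in> G i) \<Longrightarrow> X \<le> (\<Sum>i\<in>I. a i * c i (\<gamma> i))"
  shows "X \<le> (\<Sum>i\<in>I. a i * (INF g\<in>G i. c i g))"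
proof -
  have "X \<le> A + (\<Sum>i\<in>I. a i * (INF g\<in>G i. c i g))"
    if "\<And>\<gamma>. (\<And>i. i \<in> I \<Longrightarrow> \<gamma> i \<in> G i) \<Longrightarrow> X \<le> A + (\<Sum>i\<in>I. a i * c i (\<gamma> i))" for A
    using \<open>finite I\<close> a that
  proof (induction I arbitrary: A rule: finite_induct)
    case empty
    then show ?case by simp
  next
    case (insert j I)
    have "X \<le> (A + a j * (INF g\<in>G j. c j g)) + (\<Sum>i\<in>I. a i * (INF g\<in>G i. c i g))"
    proof (rule insert.IH)
      fix \<gamma> assume \<gamma>: "\<And>i. i \<in> I \<Longrightarrow> \<gamma> i \<in> G i"
      have "X \<le> (A + (\<Sum>i\<in>I. a i * c i (\<gamma> i))) + a j * (INF g\<in>G j. c j g)"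
      proof (rule ennreal_le_add_mult_INF)
        fix g assume "g \<in> G j"
        with \<gamma> have "X \<le> A + (\<Sum>i\<in>insert j I. a i * c i ((\<gamma>(j := g)) i))"
          by (intro insert.prems(3)) auto
        also have "(\<Sum>i\<in>insert j I. a i * c i ((\<gamma>(j := g)) i)) = a j * c j g + (\<Sum>i\<in>I. a i * c i (\<gamma> i))"
          using insert.hyps by (auto intro!: sum.cong)
        finally show "X \<le> A + (\<Sum>i\<in>I. a i * c i (\<gamma> i)) + a j * c j g"
          by (simp add: ac_simps)
      qed (use insert.prems in auto)
      then show "X \<le> A + a j * (INF g\<in>G j. c j g) + (\<Sum>i\<in>I. a i * c i (\<gamma> i))"
        by (simp add: ac_simps)
    qed (use insert.prems in auto)
    then show ?case
      using insert.hyps by (simp add: ac_simps)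
  qed
  from this[of 0] le show ?thesis
    by simp
qed

lemma sum_reversed_weights_eq_1:
  assumes "\<pi> r' \<noteq> 0" and "(\<Sum>r\<in>C. \<pi> r * Q r r') = \<pi> r'"
  shows "(\<Sum>r\<in>C. \<pi> r * Q r r' / \<pi> r') = (1 :: real)"
  using assms by (simp flip: sum_divide_distrib)

lemma sum_reversed_weights_ennreal:
  fixes \<pi> :: "'r \<Rightarrow> real" and Q :: "'r \<Rightarrow> 'r \<Rightarrow> real" and Y :: "'r \<Rightarrow> ennreal"
  assumes "finite C" and \<pi>_pos: "\<And>r. r \<in> C \<Longrightarrow> \<pi> r > 0"
    and Q_nonneg: "\<And>r r'. r \<in> C \<Longrightarrow> r' \<in> C \<Longrightarrow> Q r r' \<ge> 0"
    and Q_stoch: "\<And>r. r \<in> C \<Longrightarrow> (\<Sum>r'\<in>C. Q r r') = 1"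
  shows "(\<Sum>r'\<in>C. ennreal (\<pi> r') * (\<Sum>r\<in>C. ennreal (\<pi> r * Q r r' / \<pi> r') * Y r))
    = (\<Sum>r\<in>C. ennreal (\<pi> r) * Y r)"
proof -
  have "(\<Sum>r'\<in>C. ennreal (\<pi> r') * (\<Sum>r\<in>C. ennreal (\<pi> r * Q r r' / \<pi> r') * Y r))
      = (\<Sum>r'\<in>C. \<Sum>r\<in>C. ennreal (\<pi> r * Q r r') * Y r)"
  proof (intro sum.cong refl)
    fix r' assume "r' \<in> C"
    then have "ennreal (\<pi> r') * ennreal (\<pi> r * Q r r' / \<pi> r') = ennreal (\<pi> r * Q r r')" for r
      using \<pi>_pos[of r'] by (simp flip: ennreal_mult')
    then show "ennreal (\<pi> r') * (\<Sum>r\<in>C. ennreal (\<pi> r * Q r r' / \<pi> r') * Y r)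
        = (\<Sum>r\<in>C. ennreal (\<pi> r * Q r r') * Y r)"
      by (simp add: sum_distrib_left mult.assoc[symmetric])
  qed
  also have "\<dots> = (\<Sum>r\<in>C. (\<Sum>r'\<in>C. ennreal (\<pi> r * Q r r')) * Y r)"
    by (subst sum.swap) (simp add: sum_distrib_right)
  also have "\<dots> = (\<Sum>r\<in>C. ennreal (\<pi> r) * Y r)"
    using \<pi>_pos Q_nonneg Q_stoch
    by (intro sum.cong refl) (simp add: less_imp_le flip: sum_distrib_left)
  finally show ?thesis .
qed

section \<open>Mixtures of pushforwards\<close>

lemma nn_integral_dhyp_distr_le:
  assumes "sets \<nu> = sets Ihyp" "prob_space \<nu>" and F: "F \<in> Ihyp \<rightarrow>\<^sub>M Ihyp" and "0 \<le> \<rho>"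
    and F_lip: "\<And>x y. x \<in> space Ihyp \<Longrightarrow> y \<in> space Ihyp \<Longrightarrow> dhyp (F x) (F y) \<le> \<rho> * dhyp x y"
  shows "(\<integral>\<^sup>+x. ennreal (dhyp x 0) \<partial>distr \<nu> Ihyp F)
    \<le> ennreal \<rho> * (\<integral>\<^sup>+x. ennreal (dhyp x 0) \<partial>\<nu>) + ennreal (dhyp (F 0) 0)"
proof -
  have [measurable]: "F \<in> \<nu> \<rightarrow>\<^sub>M Ihyp"
    using F \<open>sets \<nu> = sets Ihyp\<close> by (simp cong: measurable_cong_sets)
  have space_\<nu>: "space \<nu> = {-1<..<1}"
    using sets_eq_imp_space_eq[OF \<open>sets \<nu> = sets Ihyp\<close>] by (simp add: space_Ihyp)
  have "(\<integral>\<^sup>+x. ennreal (dhyp x 0) \<partial>distr \<nu> Ihyp F) = (\<integral>\<^sup>+x. ennreal (dhyp (F x) 0) \<partial>\<nu>)"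
    by (intro nn_integral_distr) simp_all
  also have "\<dots> \<le> (\<integral>\<^sup>+x. ennreal \<rho> * ennreal (dhyp x 0) + ennreal (dhyp (F 0) 0) \<partial>\<nu>)"
  proof (rule nn_integral_mono)
    fix x assume "x \<in> space \<nu>"
    then have "x \<in> space Ihyp" "0 \<in> space Ihyp"
      by (simp_all add: space_\<nu> space_Ihyp)
    then have "dhyp (F x) (F 0) \<le> \<rho> * dhyp x 0"
      by (rule F_lip)
    then have "dhyp (F x) 0 \<le> \<rho> * dhyp x 0 + dhyp (F 0) 0"
      using dhyp_triangle[of "F x" 0 "F 0"] by linarith
    then show "ennreal (dhyp (F x) 0) \<le> ennreal \<rho> * ennreal (dhyp x 0) + ennreal (dhyp (F 0) 0)"
      using \<open>0 \<le> \<rho>\<close> by (simp add: dhyp_def ennreal_plus[symmetric] ennreal_mult[symmetric] del: ennreal_plus)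
  qed
  also have "\<dots> = ennreal \<rho> * (\<integral>\<^sup>+x. ennreal (dhyp x 0) \<partial>\<nu>) + ennreal (dhyp (F 0) 0)"
    using prob_space.emeasure_space_1[OF \<open>prob_space \<nu>\<close>] \<open>sets \<nu> = sets Ihyp\<close>
    by (simp add: nn_integral_add nn_integral_cmult cong: measurable_cong_sets)
  finally show ?thesis .
qed

lemma wsum_measure_distr_in_P1:
  fixes F :: "'i \<Rightarrow> real \<Rightarrow> real"
  assumes fin: "finite I" and w_nonneg: "\<And>i. i \<in> I \<Longrightarrow> w i \<ge> 0" and w_sum: "(\<Sum>i\<in>I. w i) = 1"
    and \<nu>: "\<And>i. i \<in> I \<Longrightarrow> \<nu> i \<in> P1"
    and F: "\<And>i. i \<in> I \<Longrightarrow> F i \<in> Ihyp \<rightarrow>\<^sub>M Ihyp" and "0 \<le> \<rho>"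
    and F_lip: "\<And>i x y. i \<in> I \<Longrightarrow> x \<in> space Ihyp \<Longrightarrow> y \<in> space Ihyp
      \<Longrightarrow> dhyp (F i x) (F i y) \<le> \<rho> * dhyp x y"
  shows "wsum_measure Ihyp I w (\<lambda>i. distr (\<nu> i) Ihyp (F i)) \<in> P1"
proof -
  have sets_\<nu>: "sets (\<nu> i) = sets Ihyp" and prob_\<nu>: "prob_space (\<nu> i)"
    and moment_\<nu>: "(\<integral>\<^sup>+x. ennreal (dhyp x 0) \<partial>\<nu> i) < \<infinity>" if "i \<in> I" for i
    using \<nu>[OF that] by (auto simp: P1_def)
  have "prob_space (wsum_measure Ihyp I w (\<lambda>i. distr (\<nu> i) Ihyp (F i)))"
    using F sets_\<nu> prob_\<nu>
    by (intro prob_space_wsum_measure[OF fin _ _ w_nonneg w_sum] prob_space.prob_space_distr)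
      (auto cong: measurable_cong_sets)
  moreover have "(\<integral>\<^sup>+x. ennreal (dhyp x 0) \<partial>wsum_measure Ihyp I w (\<lambda>i. distr (\<nu> i) Ihyp (F i)))
      = (\<Sum>i\<in>I. ennreal (w i) * (\<integral>\<^sup>+x. ennreal (dhyp x 0) \<partial>distr (\<nu> i) Ihyp (F i)))"
    by (intro nn_integral_wsum_measure[OF fin]) simp_all
  moreover have "ennreal (w i) * (\<integral>\<^sup>+x. ennreal (dhyp x 0) \<partial>distr (\<nu> i) Ihyp (F i)) < \<infinity>"
    if "i \<in> I" for i
    using nn_integral_dhyp_distr_le[OF sets_\<nu>[OF that] prob_\<nu>[OF that] F[OF that] \<open>0 \<le> \<rho>\<close> F_lip[OF that]]
      moment_\<nu>[OF that]
    by (simp add: ennreal_mult_less_top order.strict_trans1)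
  ultimately show ?thesis
    using fin by (simp add: P1_def)
qed

lemma measurable_map_prod:
  assumes "f \<in> M \<rightarrow>\<^sub>M N" and "g \<in> M' \<rightarrow>\<^sub>M N'"
  shows "map_prod f g \<in> M \<Otimes>\<^sub>M M' \<rightarrow>\<^sub>M N \<Otimes>\<^sub>M N'"
  using assms unfolding map_prod_def split_beta' by measurable

lemma distr_map_prod_in_couplings:
  assumes \<gamma>: "\<gamma> \<in> couplings \<eta> \<zeta>" and F: "F \<in> Ihyp \<rightarrow>\<^sub>M Ihyp"
  shows "distr \<gamma> (Ihyp \<Otimes>\<^sub>M Ihyp) (map_prod F F) \<in> couplings (distr \<eta> Ihyp F) (distr \<zeta> Ihyp F)"
proof -
  have sets_\<gamma>: "sets \<gamma> = sets (Ihyp \<Otimes>\<^sub>M Ihyp)" and "prob_space \<gamma>"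
    and marginals: "distr \<gamma> Ihyp fst = \<eta>" "distr \<gamma> Ihyp snd = \<zeta>"
    using \<gamma> by (auto simp: couplings_def)
  have FF: "map_prod F F \<in> \<gamma> \<rightarrow>\<^sub>M Ihyp \<Otimes>\<^sub>M Ihyp"
    unfolding measurable_cong_sets[OF sets_\<gamma> refl] by (rule measurable_map_prod[OF F F])
  have "distr (distr \<gamma> (Ihyp \<Otimes>\<^sub>M Ihyp) (map_prod F F)) Ihyp proj = distr (distr \<gamma> Ihyp proj) Ihyp F"
    if "proj = fst \<or> proj = snd" for proj :: "real \<times> real \<Rightarrow> real"
  proof -
    have [measurable]: "F \<in> Ihyp \<rightarrow>\<^sub>M Ihyp" "proj \<in> Ihyp \<Otimes>\<^sub>M Ihyp \<rightarrow>\<^sub>M Ihyp" "proj \<in> \<gamma> \<rightarrow>\<^sub>M Ihyp"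
      using F that sets_\<gamma> by (auto cong: measurable_cong_sets)
    have "proj \<circ> map_prod F F = F \<circ> proj"
      using that by auto
    then show ?thesis
      using FF by (simp add: distr_distr)
  qed
  with marginals show ?thesis
    using \<open>prob_space \<gamma>\<close> FF by (auto simp: couplings_def intro: prob_space.prob_space_distr)
qed

lemma transport_cost_distr_map_prod_le:
  assumes sets_\<gamma>: "sets \<gamma> = sets (Ihyp \<Otimes>\<^sub>M Ihyp)" and F: "F \<in> Ihyp \<rightarrow>\<^sub>M Ihyp" and "0 \<le> \<rho>"
    and F_lip: "\<And>x y. x \<in> space Ihyp \<Longrightarrow> y \<in> space Ihyp \<Longrightarrow> dhyp (F x) (F y) \<le> \<rho> * dhyp x y"
  shows "transport_cost (distr \<gamma> (Ihyp \<Otimes>\<^sub>M Ihyp) (map_prod F F)) \<le> ennreal \<rho> * transport_cost \<gamma>"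
proof -
  have FF: "map_prod F F \<in> \<gamma> \<rightarrow>\<^sub>M Ihyp \<Otimes>\<^sub>M Ihyp"
    unfolding measurable_cong_sets[OF sets_\<gamma> refl] by (rule measurable_map_prod[OF F F])
  have dhyp_meas: "(\<lambda>p. ennreal (dhyp (fst p) (snd p))) \<in> borel_measurable \<gamma>"
    unfolding measurable_cong_sets[OF sets_\<gamma> refl] by (fact borel_measurable_dhyp)
  have "transport_cost (distr \<gamma> (Ihyp \<Otimes>\<^sub>M Ihyp) (map_prod F F))
      = (\<integral>\<^sup>+p. ennreal (dhyp (fst (map_prod F F p)) (snd (map_prod F F p))) \<partial>\<gamma>)"
    unfolding transport_cost_def
    by (rule nn_integral_distr[OF FF]) (simp only: measurable_distr_eq1 borel_measurable_dhyp)
  also have "\<dots> \<le> (\<integral>\<^sup>+p. ennreal \<rho> * ennreal (dhyp (fst p) (snd p)) \<partial>\<gamma>)"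
  proof (rule nn_integral_mono, simp only: fst_map_prod snd_map_prod)
    fix p assume "p \<in> space \<gamma>"
    then have "p \<in> space Ihyp \<times> space Ihyp"
      by (simp add: sets_eq_imp_space_eq[OF sets_\<gamma>] space_pair_measure)
    then have "ennreal (dhyp (F (fst p)) (F (snd p))) \<le> ennreal (\<rho> * dhyp (fst p) (snd p))"
      using F_lip by (auto intro: ennreal_leI)
    then show "ennreal (dhyp (F (fst p)) (F (snd p))) \<le> ennreal \<rho> * ennreal (dhyp (fst p) (snd p))"
      by (simp add: ennreal_mult' \<open>0 \<le> \<rho>\<close>)
  qed
  also have "\<dots> = ennreal \<rho> * transport_cost \<gamma>"
    unfolding transport_cost_def by (rule nn_integral_cmult[OF dhyp_meas])
  finally show ?thesis .
qed

lemma wsum_measure_in_couplings: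
  assumes fin: "finite I" and w_nonneg: "\<And>i. i \<in> I \<Longrightarrow> w i \<ge> 0" and w_sum: "(\<Sum>i\<in>I. w i) = 1"
    and \<gamma>: "\<And>i. i \<in> I \<Longrightarrow> \<gamma> i \<in> couplings (\<eta> i) (\<zeta> i)"
  shows "wsum_measure (Ihyp \<Otimes>\<^sub>M Ihyp) I w \<gamma>
    \<in> couplings (wsum_measure Ihyp I w \<eta>) (wsum_measure Ihyp I w \<zeta>)"
proof -
  have sets_\<gamma>: "sets (\<gamma> i) = sets (Ihyp \<Otimes>\<^sub>M Ihyp)" and prob_\<gamma>: "prob_space (\<gamma> i)"
    and marginals: "distr (\<gamma> i) Ihyp fst = \<eta> i" "distr (\<gamma> i) Ihyp snd = \<zeta> i" if "i \<in> I" for i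
    using \<gamma>[OF that] by (auto simp: couplings_def)
  have "distr (wsum_measure (Ihyp \<Otimes>\<^sub>M Ihyp) I w \<gamma>) Ihyp fst = wsum_measure Ihyp I w \<eta>"
    and "distr (wsum_measure (Ihyp \<Otimes>\<^sub>M Ihyp) I w \<gamma>) Ihyp snd = wsum_measure Ihyp I w \<zeta>"
    by (simp_all add: distr_wsum_measure[OF fin sets_\<gamma>] marginals cong: wsum_measure_cong)
  moreover have "prob_space (wsum_measure (Ihyp \<Otimes>\<^sub>M Ihyp) I w \<gamma>)"
    by (rule prob_space_wsum_measure[OF fin sets_\<gamma> prob_\<gamma> w_nonneg w_sum])
  ultimately show ?thesis
    by (simp add: couplings_def)
qed

lemma transport_cost_wsum_measure:
  assumes "finite I" and "\<And>i. i \<in> I \<Longrightarrow> sets (\<gamma> i) = sets (Ihyp \<Otimes>\<^sub>M Ihyp)"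
  shows "transport_cost (wsum_measure (Ihyp \<Otimes>\<^sub>M Ihyp) I w \<gamma>) = (\<Sum>i\<in>I. ennreal (w i) * transport_cost (\<gamma> i))"
  unfolding transport_cost_def using assms by (intro nn_integral_wsum_measure) simp_all

lemma W1_wsum_measure_distr_le:
  fixes F :: "'i \<Rightarrow> real \<Rightarrow> real"
  assumes fin: "finite I" and w_nonneg: "\<And>i. i \<in> I \<Longrightarrow> w i \<ge> 0" and w_sum: "(\<Sum>i\<in>I. w i) = 1"
    and \<gamma>: "\<And>i. i \<in> I \<Longrightarrow> \<gamma> i \<in> couplings (\<eta> i) (\<zeta> i)"
    and F: "\<And>i. i \<in> I \<Longrightarrow> F i \<in> Ihyp \<rightarrow>\<^sub>M Ihyp" and "0 \<le> \<rho>"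
    and F_lip: "\<And>i x y. i \<in> I \<Longrightarrow> x \<in> space Ihyp \<Longrightarrow> y \<in> space Ihyp
      \<Longrightarrow> dhyp (F i x) (F i y) \<le> \<rho> * dhyp x y"
  shows "W1 (wsum_measure Ihyp I w (\<lambda>i. distr (\<eta> i) Ihyp (F i)))
            (wsum_measure Ihyp I w (\<lambda>i. distr (\<zeta> i) Ihyp (F i)))
    \<le> (\<Sum>i\<in>I. ennreal (w i) * (ennreal \<rho> * transport_cost (\<gamma> i)))"
proof -
  define \<Gamma> where "\<Gamma> i = distr (\<gamma> i) (Ihyp \<Otimes>\<^sub>M Ihyp) (map_prod (F i) (F i))" for i
  have sets_\<gamma>: "sets (\<gamma> i) = sets (Ihyp \<Otimes>\<^sub>M Ihyp)" if "i \<in> I" for i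
    using \<gamma>[OF that] by (simp add: couplings_def)
  have "wsum_measure (Ihyp \<Otimes>\<^sub>M Ihyp) I w \<Gamma> \<in> couplings
      (wsum_measure Ihyp I w (\<lambda>i. distr (\<eta> i) Ihyp (F i))) (wsum_measure Ihyp I w (\<lambda>i. distr (\<zeta> i) Ihyp (F i)))"
    unfolding \<Gamma>_def using \<gamma> F
    by (intro wsum_measure_in_couplings[OF fin w_nonneg w_sum] distr_map_prod_in_couplings)
  then have "W1 (wsum_measure Ihyp I w (\<lambda>i. distr (\<eta> i) Ihyp (F i)))
                (wsum_measure Ihyp I w (\<lambda>i. distr (\<zeta> i) Ihyp (F i)))
      \<le> transport_cost (wsum_measure (Ihyp \<Otimes>\<^sub>M Ihyp) I w \<Gamma>)"
    unfolding W1_eq_INF_transport_cost by (rule INF_lower)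
  also have "\<dots> = (\<Sum>i\<in>I. ennreal (w i) * transport_cost (\<Gamma> i))"
    by (intro transport_cost_wsum_measure[OF fin]) (simp add: \<Gamma>_def)
  also have "\<dots> \<le> (\<Sum>i\<in>I. ennreal (w i) * (ennreal \<rho> * transport_cost (\<gamma> i)))"
    unfolding \<Gamma>_def using sets_\<gamma> F \<open>0 \<le> \<rho>\<close> F_lip
    by (intro sum_mono mult_left_mono transport_cost_distr_map_prod_le) auto
  finally show ?thesis .
qed

lemma Hop_in_P1C:
  fixes F :: "'r \<Rightarrow> real \<Rightarrow> real"
  assumes "finite C" and \<pi>_pos: "\<And>r. r \<in> C \<Longrightarrow> \<pi> r > 0"
    and Q_nonneg: "\<And>r r'. r \<in> C \<Longrightarrow> r' \<in> C \<Longrightarrow> Q r r' \<ge> 0"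
    and \<pi>_stat: "\<And>r'. r' \<in> C \<Longrightarrow> (\<Sum>r\<in>C. \<pi> r * Q r r') = \<pi> r'"
    and F: "\<And>r. r \<in> C \<Longrightarrow> F r \<in> Ihyp \<rightarrow>\<^sub>M Ihyp" and "0 \<le> \<rho>"
    and F_lip: "\<And>r x y. r \<in> C \<Longrightarrow> x \<in> space Ihyp \<Longrightarrow> y \<in> space Ihyp
      \<Longrightarrow> dhyp (F r x) (F r y) \<le> \<rho> * dhyp x y"
    and "\<eta> \<in> P1C C"
  shows "Hop C Q \<pi> F \<eta> \<in> P1C C"
  unfolding P1C_def Hop_def
proof (rule Pi_I)
  fix r' assume "r' \<in> C"
  then have w: "\<And>r. r \<in> C \<Longrightarrow> 0 \<le> \<pi> r * Q r r' / \<pi> r'" "(\<Sum>r\<in>C. \<pi> r * Q r r' / \<pi> r') = 1"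
    using \<pi>_pos Q_nonneg \<pi>_stat by (simp_all add: less_imp_le less_imp_neq[symmetric] sum_reversed_weights_eq_1)
  show "wsum_measure Ihyp C (\<lambda>r. \<pi> r * Q r r' / \<pi> r') (\<lambda>r. distr (\<eta> r) Ihyp (F r)) \<in> P1"
    using \<open>\<eta> \<in> P1C C\<close> unfolding P1C_def
    by (intro wsum_measure_distr_in_P1[OF \<open>finite C\<close> w _ F \<open>0 \<le> \<rho>\<close> F_lip]) auto
qed

lemma WC_Hop_le:
  fixes F :: "'r \<Rightarrow> real \<Rightarrow> real"
  assumes finC: "finite C" and \<pi>_pos: "\<And>r. r \<in> C \<Longrightarrow> \<pi> r > 0"
    and Q_nonneg: "\<And>r r'. r \<in> C \<Longrightarrow> r' \<in> C \<Longrightarrow> Q r r' \<ge> 0"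
    and Q_stoch: "\<And>r. r \<in> C \<Longrightarrow> (\<Sum>r'\<in>C. Q r r') = 1"
    and \<pi>_stat: "\<And>r'. r' \<in> C \<Longrightarrow> (\<Sum>r\<in>C. \<pi> r * Q r r') = \<pi> r'"
    and F: "\<And>r. r \<in> C \<Longrightarrow> F r \<in> Ihyp \<rightarrow>\<^sub>M Ihyp" and "0 < \<rho>"
    and F_lip: "\<And>r x y. r \<in> C \<Longrightarrow> x \<in> space Ihyp \<Longrightarrow> y \<in> space Ihyp
      \<Longrightarrow> dhyp (F r x) (F r y) \<le> \<rho> * dhyp x y"
  shows "WC C \<pi> (Hop C Q \<pi> F \<eta>) (Hop C Q \<pi> F \<zeta>) \<le> ennreal \<rho> * WC C \<pi> \<eta> \<zeta>"
proof -
  define w where "w r' r = \<pi> r * Q r r' / \<pi> r'" for r' r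
  have "WC C \<pi> (Hop C Q \<pi> F \<eta>) (Hop C Q \<pi> F \<zeta>)
      \<le> (\<Sum>r\<in>C. ennreal (\<rho> * \<pi> r) * (INF \<gamma>\<in>couplings (\<eta> r) (\<zeta> r). transport_cost \<gamma>))"
  proof (rule ennreal_le_sum_mult_INF[OF finC])
    fix \<gamma> assume \<gamma>: "\<And>r. r \<in> C \<Longrightarrow> \<gamma> r \<in> couplings (\<eta> r) (\<zeta> r)"
    have "W1 (Hop C Q \<pi> F \<eta> r') (Hop C Q \<pi> F \<zeta> r')
        \<le> (\<Sum>r\<in>C. ennreal (w r' r) * (ennreal \<rho> * transport_cost (\<gamma> r)))" if "r' \<in> C" for r'
    proof -
      have "\<And>r. r \<in> C \<Longrightarrow> 0 \<le> w r' r" "(\<Sum>r\<in>C. w r' r) = 1"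
        using that \<pi>_pos Q_nonneg \<pi>_stat
        by (simp_all add: w_def less_imp_le less_imp_neq[symmetric] sum_reversed_weights_eq_1)
      then show ?thesis
        unfolding Hop_def w_def[abs_def] using \<open>0 < \<rho>\<close>
        by (intro W1_wsum_measure_distr_le[OF finC _ _ \<gamma> F _ F_lip]) auto
    qed
    then have "WC C \<pi> (Hop C Q \<pi> F \<eta>) (Hop C Q \<pi> F \<zeta>)
        \<le> (\<Sum>r'\<in>C. ennreal (\<pi> r') * (\<Sum>r\<in>C. ennreal (w r' r) * (ennreal \<rho> * transport_cost (\<gamma> r))))"
      unfolding WC_def by (intro sum_mono mult_left_mono) auto
    also have "\<dots> = (\<Sum>r\<in>C. ennreal (\<pi> r) * (ennreal \<rho> * transport_cost (\<gamma> r)))"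
      unfolding w_def using finC \<pi>_pos Q_nonneg Q_stoch by (rule sum_reversed_weights_ennreal)
    also have "\<dots> = (\<Sum>r\<in>C. ennreal (\<rho> * \<pi> r) * transport_cost (\<gamma> r))"
      using \<open>0 < \<rho>\<close> by (simp add: ennreal_mult' ac_simps)
    finally show "WC C \<pi> (Hop C Q \<pi> F \<eta>) (Hop C Q \<pi> F \<zeta>)
        \<le> (\<Sum>r\<in>C. ennreal (\<rho> * \<pi> r) * transport_cost (\<gamma> r))" .
  qed (use \<open>0 < \<rho>\<close> \<pi>_pos in auto)
  also have "\<dots> = ennreal \<rho> * WC C \<pi> \<eta> \<zeta>"
    using \<open>0 < \<rho>\<close> by (simp add: WC_def W1_eq_INF_transport_cost sum_distrib_left ennreal_mult' mult.assoc)
  finally show ?thesis .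
qed

theorem proposition3p4:
  fixes C :: "'r set" and Q :: "'r \<Rightarrow> 'r \<Rightarrow> real" and \<pi> :: "'r \<Rightarrow> real"
    and B :: "'r \<Rightarrow> real^2^2" and \<rho> :: real
  assumes finC: "finite C" and neC: "C \<noteq> {}"
    and Q_nonneg: "\<forall>r\<in>C. \<forall>r'\<in>C. Q r r' \<ge> 0"
    and Q_stoch: "\<forall>r\<in>C. (\<Sum>r'\<in>C. Q r r') = 1"
    and Q_irred: "irreducible_on C Q"
    and Q_aper: "aperiodic_on C Q"
    and \<pi>_pos: "\<forall>r\<in>C. \<pi> r > 0"
    and \<pi>_sum: "(\<Sum>r\<in>C. \<pi> r) = 1"
    and \<pi>_stat: "\<forall>r'\<in>C. (\<Sum>r\<in>C. \<pi> r * Q r r') = \<pi> r'"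
    and B_pos: "\<forall>r\<in>C. \<forall>i j. B r $ i $ j > 0"
    and B_inv: "\<forall>r\<in>C. det (B r) \<noteq> 0"
    and \<rho>: "0 < \<rho>" "\<rho> < 1"
    and f_into: "\<forall>r\<in>C. fmob (B r) ` {-1..1} \<subseteq> {-\<rho>..\<rho>}"
  shows "(\<forall>\<eta>\<in>P1C C. Hop C Q \<pi> (\<lambda>r. fmob (B r)) \<eta> \<in> P1C C) \<and>
         (\<forall>\<eta>\<in>P1C C. \<forall>\<zeta>\<in>P1C C.
            WC C \<pi> (Hop C Q \<pi> (\<lambda>r. fmob (B r)) \<eta>) (Hop C Q \<pi> (\<lambda>r. fmob (B r)) \<zeta>)
              \<le> ennreal \<rho> * WC C \<pi> \<eta> \<zeta>)"
proof -
  have F: "fmob (B r) \<in> Ihyp \<rightarrow>\<^sub>M Ihyp" if "r \<in> C" for r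
    using bspec[OF f_into that] \<rho>(2) by (rule fmob_measurable_Ihyp)
  have F_lip: "dhyp (fmob (B r) x) (fmob (B r) y) \<le> \<rho> * dhyp x y"
    if "r \<in> C" "x \<in> space Ihyp" "y \<in> space Ihyp" for r x y
    using bspec[OF B_pos that(1)] \<rho>(2) bspec[OF f_into that(1)] that(2,3)
    by (intro dhyp_fmob_le) (simp_all add: space_Ihyp)
  show ?thesis
    using finC Q_nonneg Q_stoch \<pi>_pos \<pi>_stat F \<rho> F_lip
    by (auto intro!: Hop_in_P1C[where \<rho> = \<rho>] WC_Hop_le)
qed

end
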